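(* Let $N\ge 2$ be an integer. Let $G$ be a finite, simple, bipartite graph with adjacency matrix $A$ such that (i) every vertex of $G$ has degree $N-1$, and (ii) for every edge $\{p,q\}$ of $G$, $(A^{3})_{pq}=\frac{(N-1)^{3}+1}{N}$ and $(A^{5})_{pq}=\frac{(N-1)^{5}+1}{N}$. Then for any two distinct vertices $p\neq q$ of $G$, $(A^2)_{pq}\le N-2$.
   Context: $(A^2)_{pq}$ is the number of walks of length 2 from $p$ to $q$. *)

theory Defs
  imports "HOL-Analysis.Analysis"
begin

definition simple_graph :: "('v \<Rightarrow> 'v \<Rightarrow> bool) \<Rightarrow> bool" where
  "simple_graph E \<longleftrightarrow> (\<forall>p q. E p q \<longrightarrow> E q p) \<and> (\<forall>p. \<not> E p p)"

definition bipartite :: "('v \<Rightarrow> 'v \<Rightarrow> bool) \<Rightarrow> bool" where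
  "bipartite E \<longleftrightarrow> (\<exists>X. \<forall>p q. E p q \<longrightarrow> (p \<in> X \<longleftrightarrow> q \<notin> X))"

definition degree :: "('v \<Rightarrow> 'v \<Rightarrow> bool) \<Rightarrow> 'v \<Rightarrow> nat" where
  "degree E p = card {q. E p q}"

definition adj_matrix :: "('v::finite \<Rightarrow> 'v \<Rightarrow> bool) \<Rightarrow> real^'v^'v" where
  "adj_matrix E = (\<chi> p q. if E p q then 1 else 0)"

primrec mat_power :: "real^'n::finite^'n \<Rightarrow> nat \<Rightarrow> real^'n^'n" where
  "mat_power A 0 = mat 1"
| "mat_power A (Suc k) = A ** mat_power A k"

end

theory Submission
  imports Defs
begin

text \<open>
  Fix a vertex p, let d = N - 1, and write y s = (A^2)_ps and x t = (A^3)_pt.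
  Regularity and the prescribed values of A^3 and A^5 on edges determine
  the sums of y, y^2, x and x^2 (the square sums are the diagonal entries of A^4 and A^6).
  Over the non-neighbours t of p the sum of the x t^2 equals the square of the sum of
  the x t, so a single non-neighbour t carries the whole sum d^2 - d.
  As x t is the sum of y over the d neighbours of t, y vanishes on all other
  vertices q \<noteq> p, and on the neighbours of t the known sums of y and y^2 force
  equality in Cauchy-Schwarz: y = d - 1 there.
\<close>

lemma mat_power_add: "mat_power A (m + n) = mat_power A m ** mat_power A n"
  by (induction m) (simp_all add: matrix_mul_assoc)

lemma mat_power_Suc_right: "mat_power A (Suc k) = mat_power A k ** A"
  using mat_power_add[of A k 1] by simp

lemma transpose_mat_power:
  assumes "transpose A = A"
  shows "transpose (mat_power A k) = mat_power A k"
proof (induction k)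
  case (Suc k)
  then show ?case
    by (simp add: matrix_transpose_mul assms flip: mat_power_Suc_right)
qed simp

lemma mat_power_nonneg:
  assumes "\<And>i j. A $ i $ j \<ge> 0"
  shows "mat_power A k $ i $ j \<ge> 0"
proof (induction k arbitrary: i j)
  case (Suc k)
  then show ?case by (simp add: matrix_matrix_mult_def assms sum_nonneg)
qed (simp add: mat_def)

lemma mat_power_mult_eigenvector:
  assumes "A *v v = c *s v"
  shows "mat_power A k *v v = c ^ k *s v"
  by (induction k) (simp_all add: matrix_vector_mul_assoc[symmetric] assms vector_scalar_commute)

lemma sum_le_member_if_square_sum_le_sum_squares:
  fixes x :: "'a \<Rightarrow> real"
  assumes "finite T" "\<And>t. t \<in> T \<Longrightarrow> 0 \<le> x t"
    and "(\<Sum>t\<in>T. x t)\<^sup>2 \<le> (\<Sum>t\<in>T. (x t)\<^sup>2)" and "0 < (\<Sum>t\<in>T. x t)"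
  obtains t where "t \<in> T" "(\<Sum>t\<in>T. x t) \<le> x t"
proof (rule ccontr)
  define S where "S = (\<Sum>t\<in>T. x t)"
  assume "\<not> thesis"
  with that have less: "x t < S" if "t \<in> T" for t
    using that by (force simp: S_def)
  have "(\<Sum>t\<in>T. x t * (S - x t)) = S * S - (\<Sum>t\<in>T. (x t)\<^sup>2)"
    by (simp add: S_def algebra_simps sum_subtractf sum_distrib_left power2_eq_square)
  also have "\<dots> \<le> 0"
    using assms(3) by (simp add: S_def power2_eq_square)
  finally have "(\<Sum>t\<in>T. x t * (S - x t)) = 0"
    using assms(2) less by (simp add: order_antisym sum_nonneg less_imp_le)
  then have "\<forall>t\<in>T. x t * (S - x t) = 0"
    using sum_nonneg_eq_0_iff[of T "\<lambda>t. x t * (S - x t)"] assms(1,2) less by (simp add: less_imp_le)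
  then have "\<forall>t\<in>T. x t = 0"
    using less by auto
  then have "S = 0"
    by (simp add: S_def)
  with assms(4) show False
    by (simp add: S_def)
qed

lemma eq_const_if_sum_and_sum_squares:
  fixes y :: "'a \<Rightarrow> real" and c :: real
  assumes "finite B" "(\<Sum>s\<in>B. y s) = real (card B) * c"
    and "(\<Sum>s\<in>B. (y s)\<^sup>2) \<le> real (card B) * c\<^sup>2"
    and "s \<in> B"
  shows "y s = c"
proof -
  have "(\<Sum>s\<in>B. (y s - c)\<^sup>2) = (\<Sum>s\<in>B. (y s)\<^sup>2) - 2 * c * (\<Sum>s\<in>B. y s) + real (card B) * c\<^sup>2"
    by (simp add: power2_diff sum.distrib sum_subtractf sum_distrib_left sum_distrib_right mult_ac)
  also have "\<dots> \<le> 0"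
    using assms(2,3) by (simp add: power2_eq_square mult_ac)
  finally have "(\<Sum>s\<in>B. (y s - c)\<^sup>2) = 0"
    by (simp add: order_antisym sum_nonneg)
  then have "(y s - c)\<^sup>2 = 0"
    using sum_nonneg_eq_0_iff[of B "\<lambda>s. (y s - c)\<^sup>2"] assms(1,4) by simp
  then show ?thesis by simp
qed

lemma zero_outside_if_sum_le_sum_subset:
  fixes y :: "'a \<Rightarrow> real"
  assumes "finite R" "B \<subseteq> R" "\<And>s. s \<in> R \<Longrightarrow> 0 \<le> y s"
    and "(\<Sum>s\<in>R. y s) \<le> (\<Sum>s\<in>B. y s)" and "s \<in> R - B"
  shows "y s = 0"
proof -
  have "(\<Sum>s\<in>R. y s) = (\<Sum>s\<in>B. y s) + (\<Sum>s\<in>R - B. y s)"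
    using assms(1,2) by (metis sum.subset_diff add.commute)
  moreover have "0 \<le> (\<Sum>s\<in>R - B. y s)"
    using assms(3) by (intro sum_nonneg) auto
  ultimately have "(\<Sum>s\<in>R - B. y s) = 0"
    using assms(4) by linarith
  then show ?thesis
    using assms(1,3,5) by (subst (asm) sum_nonneg_eq_0_iff) auto
qed

locale regular_simple_graph =
  fixes E :: "'v::finite \<Rightarrow> 'v \<Rightarrow> bool" and d :: nat
  assumes simple: "simple_graph E" and regular: "\<And>p. degree E p = d"
begin

abbreviation walks :: "nat \<Rightarrow> real^'v^'v" where
  "walks \<equiv> mat_power (adj_matrix E)"

lemma edge_sym: "E p q \<Longrightarrow> E q p"
  using simple by (simp add: simple_graph_def)

lemma adj_matrix_nth: "adj_matrix E $ p $ q = (if E p q then 1 else 0)"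
  by (simp add: adj_matrix_def)

lemma adj_matrix_sym: "adj_matrix E $ p $ q = adj_matrix E $ q $ p"
  by (auto simp: adj_matrix_nth dest: edge_sym)

lemma walks_sym: "walks k $ p $ q = walks k $ q $ p"
proof -
  have "transpose (adj_matrix E) = adj_matrix E"
    by (simp add: transpose_def vec_eq_iff adj_matrix_sym)
  then have "transpose (walks k) = walks k"
    by (rule transpose_mat_power)
  moreover have "walks k $ p $ q = transpose (walks k) $ q $ p"
    by (simp add: transpose_def)
  ultimately show ?thesis
    by simp
qed

lemma walks_nonneg: "walks k $ p $ q \<ge> 0"
  by (rule mat_power_nonneg) (simp add: adj_matrix_nth)

lemma card_neighbours: "card {q. E p q} = d"
  using regular by (simp add: degree_def)

lemma sum_adj_matrix_row: "(\<Sum>q\<in>UNIV. adj_matrix E $ p $ q * f q) = (\<Sum>q | E p q. f q)"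
proof -
  have "adj_matrix E $ p $ q * f q = (if E p q then f q else 0)" for q
    by (simp add: adj_matrix_nth)
  then show ?thesis
    by (simp add: sum.If_cases)
qed

lemma sum_walks_row: "(\<Sum>q\<in>UNIV. walks k $ p $ q) = real d ^ k"
proof -
  have "adj_matrix E *v vec 1 = real d *s vec 1"
    using sum_adj_matrix_row[of _ "\<lambda>_. 1"]
    by (simp add: vec_eq_iff matrix_vector_mult_def card_neighbours)
  then have "walks k *v vec 1 = real d ^ k *s vec 1"
    by (rule mat_power_mult_eigenvector)
  then show ?thesis
    by (simp add: vec_eq_iff matrix_vector_mult_def)
qed

lemma walks_Suc_nth: "walks (Suc k) $ p $ q = (\<Sum>s | E q s. walks k $ p $ s)"
proof -
  have "walks (Suc k) $ p $ q = (\<Sum>s\<in>UNIV. adj_matrix E $ q $ s * walks k $ p $ s)"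
    by (simp only: mat_power_Suc_right) (simp add: matrix_matrix_mult_def mult.commute adj_matrix_sym)
  then show ?thesis
    by (simp add: sum_adj_matrix_row)
qed

lemma walks_2_diag: "walks 2 $ p $ p = d"
proof -
  have "walks 2 $ p $ p = (\<Sum>s | E p s. walks 1 $ p $ s)"
    by (rule walks_Suc_nth[of 1, unfolded Suc_1])
  also have "\<dots> = (\<Sum>s | E p s. 1)"
    by (rule sum.cong) (simp_all add: adj_matrix_nth)
  finally show ?thesis
    by (simp add: card_neighbours)
qed

lemma sum_walks_squared:
  fixes c :: real
  assumes "\<And>a b. E a b \<Longrightarrow> walks (2 * k + 1) $ a $ b = c"
  shows "(\<Sum>s\<in>UNIV. (walks (Suc k) $ p $ s)\<^sup>2) = d * c"
proof -
  have "(\<Sum>s\<in>UNIV. (walks (Suc k) $ p $ s)\<^sup>2) = walks (Suc k + Suc k) $ p $ p"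
    by (simp only: mat_power_add matrix_matrix_mult_def vec_lambda_beta power2_eq_square
        walks_sym[of "Suc k" _ p])
  also have "Suc k + Suc k = Suc (2 * k + 1)"
    by simp
  also have "walks (Suc (2 * k + 1)) $ p $ p = (\<Sum>s | E p s. walks (2 * k + 1) $ p $ s)"
    by (rule walks_Suc_nth)
  also have "\<dots> = (\<Sum>s | E p s. c)"
    by (rule sum.cong[OF refl], rule assms) simp
  finally show ?thesis
    by (simp add: card_neighbours)
qed

lemma sum_UNIV_split_neighbours:
  "(\<Sum>t\<in>UNIV. f t) = (\<Sum>t | E p t. f t) + (\<Sum>t | \<not> E p t. f t)"
  using sum.If_cases[of UNIV "E p" f f] by (simp add: Collect_neg_eq)

lemma sum_UNIV_remove: "(\<Sum>t\<in>UNIV. f t) = f p + (\<Sum>t\<in>UNIV - {p}. f t)" for f :: "'v \<Rightarrow> real"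
  by (rule sum.remove) simp_all

context
  fixes p :: 'v
  assumes walks_3_edge: "\<And>a b. E a b \<Longrightarrow> walks 3 $ a $ b = real d ^ 2 - d + 1"
begin

lemma sums_walks_2_off_diagonal:
  shows "(\<Sum>s\<in>UNIV - {p}. walks 2 $ p $ s) = real d ^ 2 - d"
    and "(\<Sum>s\<in>UNIV - {p}. (walks 2 $ p $ s)\<^sup>2) = real d * (real d - 1)\<^sup>2"
proof -
  have "(\<Sum>s\<in>UNIV. (walks 2 $ p $ s)\<^sup>2) = d * (real d ^ 2 - d + 1)"
    using sum_walks_squared[of 1, unfolded Suc_1] walks_3_edge by simp
  then show "(\<Sum>s\<in>UNIV - {p}. (walks 2 $ p $ s)\<^sup>2) = real d * (real d - 1)\<^sup>2"
    using sum_UNIV_remove[of "\<lambda>s. (walks 2 $ p $ s)\<^sup>2" p]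
    by (simp add: walks_2_diag power2_eq_square power3_eq_cube algebra_simps)
  show "(\<Sum>s\<in>UNIV - {p}. walks 2 $ p $ s) = real d ^ 2 - d"
    using sum_UNIV_remove[of "\<lambda>s. walks 2 $ p $ s" p] sum_walks_row[of 2 p]
    by (simp add: walks_2_diag)
qed

lemma sums_walks_3_non_neighbours:
  assumes walks_5_edge: "\<And>a b. E a b \<Longrightarrow> walks 5 $ a $ b = real d ^ 4 - real d ^ 3 + real d ^ 2 - d + 1"
  shows "(\<Sum>t | \<not> E p t. walks 3 $ p $ t) = real d ^ 2 - d"
    and "(\<Sum>t | \<not> E p t. (walks 3 $ p $ t)\<^sup>2) = (real d ^ 2 - d)\<^sup>2"
proof -
  have "Suc 2 = 3" "2 * 2 + 1 = (5::nat)"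
    by simp_all
  then have "(\<Sum>t\<in>UNIV. (walks 3 $ p $ t)\<^sup>2) = d * (real d ^ 4 - real d ^ 3 + real d ^ 2 - d + 1)"
    using sum_walks_squared[of 2] walks_5_edge by simp
  then show "(\<Sum>t | \<not> E p t. (walks 3 $ p $ t)\<^sup>2) = (real d ^ 2 - d)\<^sup>2"
    using sum_UNIV_split_neighbours[of "\<lambda>t. (walks 3 $ p $ t)\<^sup>2" p]
    by (simp add: walks_3_edge card_neighbours power2_eq_square power3_eq_cube power4_eq_xxxx algebra_simps)
  show "(\<Sum>t | \<not> E p t. walks 3 $ p $ t) = real d ^ 2 - d"
    using sum_UNIV_split_neighbours[of "\<lambda>t. walks 3 $ p $ t" p] sum_walks_row[of 3 p]
    by (simp add: walks_3_edge card_neighbours power2_eq_square power3_eq_cube power4_eq_xxxx algebra_simps)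
qed

lemma walks_2_le_if_non_neighbour_carries_walks_3:
  assumes "\<not> E p t" "real d ^ 2 - d \<le> walks 3 $ p $ t" "q \<noteq> p" "1 \<le> d"
  shows "walks 2 $ p $ q \<le> real d - 1"
proof -
  define R where "R = UNIV - {p}"
  define B where "B = {s. E t s}"
  have B_R: "B \<subseteq> R"
    using assms(1) by (auto simp: B_def R_def dest: edge_sym)
  have "Suc 2 = 3"
    by simp
  then have walks_3_t: "walks 3 $ p $ t = (\<Sum>s\<in>B. walks 2 $ p $ s)"
    using walks_Suc_nth[of 2 p t] by (simp add: B_def)
  have outside_B: "walks 2 $ p $ s = 0" if "s \<in> R - B" for s
  proof (rule zero_outside_if_sum_le_sum_subset[of R B])
    show "(\<Sum>s\<in>R. walks 2 $ p $ s) \<le> (\<Sum>s\<in>B. walks 2 $ p $ s)"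
      using assms(2) sums_walks_2_off_diagonal(1) walks_3_t by (simp add: R_def)
  qed (use B_R that walks_nonneg in auto)
  have on_B: "walks 2 $ p $ s = real d - 1" if "s \<in> B" for s
  proof (rule eq_const_if_sum_and_sum_squares[OF _ _ _ that])
    have "(\<Sum>s\<in>B. walks 2 $ p $ s) = (\<Sum>s\<in>R. walks 2 $ p $ s)"
      using B_R outside_B by (intro sum.mono_neutral_left) auto
    then show "(\<Sum>s\<in>B. walks 2 $ p $ s) = real (card B) * (real d - 1)"
      using sums_walks_2_off_diagonal(1)
      by (simp add: R_def B_def card_neighbours power2_eq_square algebra_simps)
    have "(\<Sum>s\<in>B. (walks 2 $ p $ s)\<^sup>2) = (\<Sum>s\<in>R. (walks 2 $ p $ s)\<^sup>2)"
      using B_R outside_B by (intro sum.mono_neutral_left) auto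
    then show "(\<Sum>s\<in>B. (walks 2 $ p $ s)\<^sup>2) \<le> real (card B) * (real d - 1)\<^sup>2"
      using sums_walks_2_off_diagonal(2) by (simp add: R_def B_def card_neighbours)
  qed simp
  have "q \<in> R"
    using assms(3) by (simp add: R_def)
  then show ?thesis
    using on_B outside_B[of q] assms(4) by (cases "q \<in> B") auto
qed

lemma walks_2_off_diagonal_le:
  assumes walks_5_edge: "\<And>a b. E a b \<Longrightarrow> walks 5 $ a $ b = real d ^ 4 - real d ^ 3 + real d ^ 2 - d + 1"
    and "1 \<le> d" "q \<noteq> p"
  shows "walks 2 $ p $ q \<le> real d - 1"
proof (cases "d = 1")
  case True
  then have "(\<Sum>s\<in>UNIV - {p}. walks 2 $ p $ s) \<le> (\<Sum>s\<in>{}. walks 2 $ p $ s)"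
    using sums_walks_2_off_diagonal(1) by simp
  then have "walks 2 $ p $ q = 0"
    by (rule zero_outside_if_sum_le_sum_subset[rotated 3]) (use assms(3) walks_nonneg in auto)
  with True show ?thesis
    by simp
next
  case False
  then have "0 < real d ^ 2 - d"
    using assms(2) by (simp add: power2_eq_square)
  moreover note sums_walks_3_non_neighbours[OF walks_5_edge]
  ultimately obtain t where "t \<in> {t. \<not> E p t}" "real d ^ 2 - d \<le> walks 3 $ p $ t"
    using sum_le_member_if_square_sum_le_sum_squares[of "{t. \<not> E p t}" "\<lambda>t. walks 3 $ p $ t"]
    by (auto simp: walks_nonneg)
  then show ?thesis
    using walks_2_le_if_non_neighbour_carries_walks_3 assms(2,3) by simp
qed

end

end

lemma cube_plus_one_div: "x \<noteq> -1 \<Longrightarrow> (x ^ 3 + 1) / (x + 1) = x ^ 2 - x + (1::real)"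
  by (simp add: field_simps power2_eq_square power3_eq_cube)

lemma fifth_power_plus_one_div:
  "x \<noteq> -1 \<Longrightarrow> (x ^ 5 + 1) / (x + 1) = x ^ 4 - x ^ 3 + x ^ 2 - x + (1::real)"
  by (simp add: field_simps power2_eq_square power3_eq_cube power4_eq_xxxx)
     (simp add: algebra_simps power_numeral_reduce)

theorem lemma4:
  fixes E :: "'v::finite \<Rightarrow> 'v \<Rightarrow> bool" and N :: nat
  assumes "N \<ge> 2"
    and "simple_graph E"
    and "bipartite E"
    and "\<And>p. degree E p = N - 1"
    and "\<And>p q. E p q \<Longrightarrow>
           mat_power (adj_matrix E) 3 $ p $ q = ((real N - 1) ^ 3 + 1) / real N"
    and "\<And>p q. E p q \<Longrightarrow>
           mat_power (adj_matrix E) 5 $ p $ q = ((real N - 1) ^ 5 + 1) / real N"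
    and "p \<noteq> q"
  shows "mat_power (adj_matrix E) 2 $ p $ q \<le> real N - 2"
proof -
  define d where "d = N - 1"
  have real_N: "real N = real d + 1"
    using assms(1) by (simp add: d_def)
  interpret regular_simple_graph E d
    using assms(2,4) by unfold_locales (simp_all add: d_def)
  have "walks 2 $ p $ q \<le> real d - 1"
  proof (rule walks_2_off_diagonal_le)
    show "walks 3 $ a $ b = real d ^ 2 - d + 1" if "E a b" for a b
      using assms(5)[OF that] by (simp add: real_N cube_plus_one_div)
    show "walks 5 $ a $ b = real d ^ 4 - real d ^ 3 + real d ^ 2 - d + 1" if "E a b" for a b
      using assms(6)[OF that] by (simp add: real_N fifth_power_plus_one_div)
  qed (use assms(1,7) d_def in auto)
  then show ?thesis
    by (simp add: real_N)
qed

end
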